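(* Let $\alpha>0$ and define, for $\varrho\in[0,1]$, \[ \Xi(\varrho)=-S(\varrho)+\varrho\log\pi_1(\alpha\varrho)+(1-\varrho)\log\pi_1\bigl(\alpha(1-\varrho)\bigr)-\alpha\varrho(1-\varrho). \] Then $\Xi$ is continuous on $[0,1]$, symmetric about $\varrho=1/2$ (i.e. $\Xi(\varrho)=\Xi(1-\varrho)$), strictly convex on $[0,1]$, and consequently $\Xi(\varrho)<\Xi(0)$ for all $\varrho\in(0,1)$. Moreover, the function $G(\eta)=\eta\log\frac{1-\mathrm{e}^{-\eta}}{\eta}$ satisfies $G''(\eta)+1>0$ for all $\eta>0$.
   Context: $S(\varrho)=\varrho\log\varrho+(1-\varrho)\log(1-\varrho)$ with the convention $0\log0=0$; $\pi_1(x)=1-\mathrm{e}^{-x}$; the terms $\varrho\log\pi_1(\alpha\varrho)$ and $(1-\varrho)\log\pi_1(\alpha(1-\varrho))$ are interpreted as $0$ at $\varrho=0$ and $\varrho=1$ respectively. *)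

theory Defs
  imports "HOL-Analysis.Analysis"
begin

definition Sent :: "real \<Rightarrow> real" where
  "Sent \<rho> = (if \<rho> = 0 then 0 else \<rho> * ln \<rho>)
           + (if \<rho> = 1 then 0 else (1 - \<rho>) * ln (1 - \<rho>))"

definition pi1 :: "real \<Rightarrow> real" where
  "pi1 x = 1 - exp (- x)"

definition Xi :: "real \<Rightarrow> real \<Rightarrow> real" where
  "Xi \<alpha> \<rho> = - Sent \<rho>
      + (if \<rho> = 0 then 0 else \<rho> * ln (pi1 (\<alpha> * \<rho>)))
      + (if \<rho> = 1 then 0 else (1 - \<rho>) * ln (pi1 (\<alpha> * (1 - \<rho>))))
      - \<alpha> * \<rho> * (1 - \<rho>)"

definition Gfun :: "real \<Rightarrow> real" where
  "Gfun \<eta> = \<eta> * ln ((1 - exp (- \<eta>)) / \<eta>)"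

definition strict_convex_on :: "real set \<Rightarrow> (real \<Rightarrow> real) \<Rightarrow> bool" where
  "strict_convex_on A f \<longleftrightarrow>
     (\<forall>x\<in>A. \<forall>y\<in>A. \<forall>t. x \<noteq> y \<and> 0 < t \<and> t < 1 \<longrightarrow>
        f ((1 - t) * x + t * y) < (1 - t) * f x + t * f y)"

end

theory Submission
  imports Defs "HOL-Real_Asymp.Real_Asymp"
begin

(* Writing G for Gfun, on [0,1] one has
     Xi a r = ln a + (G (a r) + G (a (1 - r))) / a - a r (1 - r),
   which makes the symmetry evident and gives continuity, as G h -> 0 for h -> 0.
   Differentiating twice, Xi'' = a (G'' (a r) + G'' (a (1 - r)) + 2), so strict convexity
   reduces to G'' > -1.  After clearing denominators this is the inequality
   h^2 + 2 cosh h - 2 < 2 h sinh h for h > 0: both sides agree at 0, and the derivative of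
   their difference is 2 h (cosh h - 1) > 0.  A strictly convex function with equal values at
   the endpoints lies strictly below them in between. *)

lemma strict_convex_on_linorderI:
  fixes f :: "real \<Rightarrow> real"
  assumes "\<And>x y t. x \<in> A \<Longrightarrow> y \<in> A \<Longrightarrow> x < y \<Longrightarrow> 0 < t \<Longrightarrow> t < 1 \<Longrightarrow>
      f ((1 - t) * x + t * y) < (1 - t) * f x + t * f y"
  shows "strict_convex_on A f"
  unfolding strict_convex_on_def
proof (intro ballI allI impI)
  fix x y t :: real
  assume x: "x \<in> A" and y: "y \<in> A" and xyt: "x \<noteq> y \<and> 0 < t \<and> t < 1"
  show "f ((1 - t) * x + t * y) < (1 - t) * f x + t * f y"
  proof (cases "x < y")
    case True
    then show ?thesis using assms x y xyt by blast
  next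
    case False
    then have "y < x" using xyt by auto
    have "f ((1 - (1 - t)) * y + (1 - t) * x) < (1 - (1 - t)) * f y + (1 - t) * f x"
      by (rule assms) (use x y xyt \<open>y < x\<close> in auto)
    then show ?thesis by (simp add: algebra_simps)
  qed
qed

lemma strict_convex_onD:
  assumes "strict_convex_on A f" "x \<in> A" "y \<in> A" "x \<noteq> y" "0 < t" "t < 1"
  shows "f ((1 - t) * x + t * y) < (1 - t) * f x + t * f y"
  using assms unfolding strict_convex_on_def by blast

lemma mvt_real:
  fixes f f' :: "real \<Rightarrow> real"
  assumes "a < b" "continuous_on {a..b} f"
    and "\<And>x. a < x \<Longrightarrow> x < b \<Longrightarrow> (f has_real_derivative f' x) (at x)"
  obtains \<xi> where "a < \<xi>" "\<xi> < b" "f b - f a = (b - a) * f' \<xi>"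
proof -
  obtain \<xi> where "a < \<xi>" "\<xi> < b" "f b - f a = f' \<xi> * (b - a)"
    using mvt[OF assms(1,2), of "\<lambda>x. (*) (f' x)"] assms(3)
    by (auto simp: has_field_derivative_def)
  then show ?thesis using that by (simp add: mult.commute)
qed

lemma strict_convex_on_IccI:
  fixes f f' :: "real \<Rightarrow> real"
  assumes cont: "continuous_on {a..b} f"
    and deriv: "\<And>x. a < x \<Longrightarrow> x < b \<Longrightarrow> (f has_real_derivative f' x) (at x)"
    and mono: "strict_mono_on {a<..<b} f'"
  shows "strict_convex_on {a..b} f"
proof (rule strict_convex_on_linorderI)
  fix x y t :: real
  assume x: "x \<in> {a..b}" and y: "y \<in> {a..b}" and "x < y" "0 < t" "t < 1"
  define z where "z = (1 - t) * x + t * y"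
  have zx: "z - x = t * (y - x)" and yz: "y - z = (1 - t) * (y - x)"
    by (simp_all add: z_def algebra_simps)
  have "0 < t * (y - x)" "0 < (1 - t) * (y - x)"
    using \<open>x < y\<close> \<open>0 < t\<close> \<open>t < 1\<close> by simp_all
  then have "x < z" "z < y"
    unfolding zx[symmetric] yz[symmetric] by simp_all
  have mvt_between: "\<exists>\<xi>. u < \<xi> \<and> \<xi> < v \<and> f v - f u = (v - u) * f' \<xi>"
    if "x \<le> u" "u < v" "v \<le> y" for u v
  proof -
    have "continuous_on {u..v} f"
      using cont by (rule continuous_on_subset) (use x y that in auto)
    moreover have "(f has_real_derivative f' \<xi>) (at \<xi>)" if "u < \<xi>" "\<xi> < v" for \<xi>
      using deriv x y that \<open>x \<le> u\<close> \<open>v \<le> y\<close> by auto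
    ultimately obtain \<xi> where "u < \<xi>" "\<xi> < v" "f v - f u = (v - u) * f' \<xi>"
      by (rule mvt_real[OF \<open>u < v\<close>])
    then show ?thesis by blast
  qed
  obtain \<xi>\<^sub>1 where \<xi>\<^sub>1: "x < \<xi>\<^sub>1" "\<xi>\<^sub>1 < z" "f z - f x = (z - x) * f' \<xi>\<^sub>1"
    using mvt_between[of x z] \<open>x < z\<close> \<open>z < y\<close> by auto
  obtain \<xi>\<^sub>2 where \<xi>\<^sub>2: "z < \<xi>\<^sub>2" "\<xi>\<^sub>2 < y" "f y - f z = (y - z) * f' \<xi>\<^sub>2"
    using mvt_between[of z y] \<open>x < z\<close> \<open>z < y\<close> by auto
  have "f' \<xi>\<^sub>1 < f' \<xi>\<^sub>2"
    by (rule strict_mono_onD[OF mono]) (use \<xi>\<^sub>1 \<xi>\<^sub>2 x y in auto)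
  then have "0 < t * (1 - t) * (y - x) * (f' \<xi>\<^sub>2 - f' \<xi>\<^sub>1)"
    using \<open>x < y\<close> \<open>0 < t\<close> \<open>t < 1\<close> by simp
  also have "\<dots> = t * ((y - z) * f' \<xi>\<^sub>2) - (1 - t) * ((z - x) * f' \<xi>\<^sub>1)"
    unfolding zx yz by (simp add: algebra_simps)
  also have "\<dots> = (1 - t) * f x + t * f y - f z"
    unfolding \<xi>\<^sub>1(3)[symmetric] \<xi>\<^sub>2(3)[symmetric] by (simp add: algebra_simps)
  finally show "f z < (1 - t) * f x + t * f y" by simp
qed

lemma strict_mono_on_if_deriv_pos:
  fixes g g' :: "real \<Rightarrow> real"
  assumes "\<And>x. a < x \<Longrightarrow> x < b \<Longrightarrow> (g has_real_derivative g' x) (at x)"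
    and "\<And>x. a < x \<Longrightarrow> x < b \<Longrightarrow> g' x > 0"
  shows "strict_mono_on {a<..<b} g"
proof (rule strict_mono_onI)
  fix u v assume u: "u \<in> {a<..<b}" and v: "v \<in> {a<..<b}" and "u < v"
  show "g u < g v"
  proof (rule DERIV_pos_imp_increasing[OF \<open>u < v\<close>])
    fix x assume "u \<le> x" "x \<le> v"
    then have "a < x" "x < b" using u v by auto
    then show "\<exists>y. (g has_real_derivative y) (at x) \<and> y > 0" using assms by blast
  qed
qed

lemma strict_convex_on_Icc_below_endpoints:
  fixes f :: "real \<Rightarrow> real"
  assumes "strict_convex_on {a..b} f" "f a = f b" "x \<in> {a<..<b}"
  shows "f x < f a"
proof -
  have "a < b" using assms(3) by simp
  define t where "t = (x - a) / (b - a)"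
  have "0 < t" "t < 1" using assms(3) by (auto simp: t_def field_simps)
  moreover have "t * (b - a) = x - a" using \<open>a < b\<close> by (simp add: t_def)
  then have "x = (1 - t) * a + t * b" by (simp add: algebra_simps)
  ultimately have "f x < (1 - t) * f a + t * f b"
    using strict_convex_onD[OF assms(1)] \<open>a < b\<close> by simp
  then show ?thesis using assms(2) by (simp add: algebra_simps)
qed

lemma cosh_real_gt_1: "x \<noteq> 0 \<Longrightarrow> cosh (x :: real) > 1"
  using cosh_real_ge_1[of x] cosh_real_one_iff[of x] by linarith

lemma sinh_cosh_inequality:
  fixes s :: real
  assumes "s > 0"
  shows "s\<^sup>2 + 2 * cosh s - 2 < 2 * s * sinh s"
proof -
  let ?h = "\<lambda>x::real. 2 * x * sinh x - x\<^sup>2 - 2 * cosh x"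
  have "?h 0 < ?h s"
  proof (rule DERIV_pos_imp_increasing_open[OF assms])
    fix x :: real assume "0 < x" "x < s"
    have "(?h has_real_derivative 2 * x * (cosh x - 1)) (at x)"
      by (auto intro!: derivative_eq_intros simp: algebra_simps power2_eq_square)
    moreover have "2 * x * (cosh x - 1) > 0"
      using \<open>0 < x\<close> cosh_real_gt_1[of x] by simp
    ultimately show "\<exists>y. (?h has_real_derivative y) (at x) \<and> y > 0" by blast
  qed (intro continuous_intros)
  then show ?thesis by simp
qed

definition Gfun' :: "real \<Rightarrow> real" where
  "Gfun' \<eta> = ln (1 - exp (- \<eta>)) - ln \<eta> + \<eta> / (exp \<eta> - 1) - 1"

definition Gfun'' :: "real \<Rightarrow> real" where
  "Gfun'' \<eta> = 1 / (exp \<eta> - 1) - 1 / \<eta> + (exp \<eta> - 1 - \<eta> * exp \<eta>) / (exp \<eta> - 1)\<^sup>2"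

lemma Gfun_eq_ln_diff: "\<eta> > 0 \<Longrightarrow> Gfun \<eta> = \<eta> * (ln (1 - exp (- \<eta>)) - ln \<eta>)"
  by (simp add: Gfun_def ln_div)

lemma isCont_Gfun: "isCont Gfun \<eta>"
proof (cases "\<eta> = 0")
  case True
  have "(Gfun \<longlongrightarrow> 0) (at 0)"
    unfolding Gfun_def by real_asymp
  then show ?thesis using True by (simp add: isCont_def Gfun_def)
next
  case False
  then have "(1 - exp (- \<eta>)) / \<eta> > 0"
    by (cases "\<eta> > 0") (auto simp: divide_pos_pos divide_neg_neg)
  then show ?thesis
    unfolding Gfun_def using False by (intro continuous_intros) auto
qed

lemma has_real_derivative_Gfun:
  assumes "\<eta> > 0"
  shows "(Gfun has_real_derivative Gfun' \<eta>) (at \<eta>)"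
proof -
  have "exp (- \<eta>) < 1" "exp \<eta> > 1" using assms by simp_all
  then have "((\<lambda>x. x * (ln (1 - exp (- x)) - ln x)) has_real_derivative Gfun' \<eta>) (at \<eta>)"
    using assms unfolding Gfun'_def
    by (auto intro!: derivative_eq_intros simp: exp_minus field_simps)
  then show ?thesis
    by (rule has_field_derivative_transform_within_open[where S = "{0<..}"])
      (use assms Gfun_eq_ln_diff in auto)
qed

lemma has_real_derivative_Gfun':
  assumes "\<eta> > 0"
  shows "(Gfun' has_real_derivative Gfun'' \<eta>) (at \<eta>)"
proof -
  have "exp (- \<eta>) < 1" "exp \<eta> > 1" using assms by simp_all
  then show ?thesis
    using assms unfolding Gfun'_def Gfun''_def
    by (auto intro!: derivative_eq_intros simp: exp_minus field_simps power2_eq_square)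
qed

lemma deriv2_Gfun:
  assumes "\<eta> > 0"
  shows "deriv (deriv Gfun) \<eta> = Gfun'' \<eta>"
proof -
  have "(deriv Gfun has_real_derivative Gfun'' \<eta>) (at \<eta>)"
    using has_real_derivative_Gfun'[OF assms]
    by (rule has_field_derivative_transform_within_open[where S = "{0<..}"])
      (use assms in \<open>auto simp: DERIV_imp_deriv[OF has_real_derivative_Gfun]\<close>)
  then show ?thesis by (rule DERIV_imp_deriv)
qed

lemma Gfun''_plus_1:
  assumes "\<eta> > 0"
  shows "Gfun'' \<eta> + 1 = exp \<eta> * (2 * \<eta> * sinh \<eta> - \<eta>\<^sup>2 - 2 * cosh \<eta> + 2) / (\<eta> * (exp \<eta> - 1)\<^sup>2)"
proof -
  have numerator: "\<eta> * ((exp \<eta>)\<^sup>2 - 1) - \<eta>\<^sup>2 * exp \<eta> - (exp \<eta> - 1)\<^sup>2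
      = exp \<eta> * (2 * \<eta> * sinh \<eta> - \<eta>\<^sup>2 - 2 * cosh \<eta> + 2)"
    by (simp add: sinh_def cosh_def exp_minus field_simps power2_eq_square)
  have "exp \<eta> - 1 \<noteq> 0" using assms by simp
  then have "Gfun'' \<eta> + 1
      = (\<eta> * ((exp \<eta>)\<^sup>2 - 1) - \<eta>\<^sup>2 * exp \<eta> - (exp \<eta> - 1)\<^sup>2) / (\<eta> * (exp \<eta> - 1)\<^sup>2)"
    using assms unfolding Gfun''_def by (simp add: divide_simps) algebra
  then show ?thesis unfolding numerator .
qed

lemma Gfun''_gt_minus_1:
  assumes "\<eta> > 0"
  shows "Gfun'' \<eta> > -1"
proof -
  have "exp \<eta> > 1" using assms by simp
  then have "exp \<eta> * (2 * \<eta> * sinh \<eta> - \<eta>\<^sup>2 - 2 * cosh \<eta> + 2) / (\<eta> * (exp \<eta> - 1)\<^sup>2) > 0"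
    using assms sinh_cosh_inequality[OF assms] by (intro divide_pos_pos) auto
  then show ?thesis using Gfun''_plus_1[OF assms] by linarith
qed

lemma continuous_on_Gfun [continuous_intros]:
  "continuous_on A f \<Longrightarrow> continuous_on A (\<lambda>x. Gfun (f x))"
  using continuous_on_compose2[of UNIV Gfun A f] isCont_Gfun
  by (auto intro: continuous_at_imp_continuous_on)

lemma Xi_eq_Gfun:
  assumes "\<alpha> > 0" "\<rho> \<in> {0..1}"
  shows "Xi \<alpha> \<rho> = ln \<alpha> + (Gfun (\<alpha> * \<rho>) + Gfun (\<alpha> * (1 - \<rho>))) / \<alpha> - \<alpha> * \<rho> * (1 - \<rho>)"
proof -
  have Gfun_scaled: "Gfun (\<alpha> * r) / \<alpha> = r * (ln (pi1 (\<alpha> * r)) - ln \<alpha> - ln r)" if "r > 0" for r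
    using Gfun_eq_ln_diff[of "\<alpha> * r"] assms that by (simp add: pi1_def ln_mult field_simps)
  consider "\<rho> = 0" | "\<rho> = 1" | "0 < \<rho>" "\<rho> < 1"
    using assms(2) by fastforce
  then show ?thesis
  proof cases
    case 1
    then show ?thesis using Gfun_scaled[of 1] by (simp add: Xi_def Sent_def Gfun_def)
  next
    case 2
    then show ?thesis using Gfun_scaled[of 1] by (simp add: Xi_def Sent_def Gfun_def)
  next
    case 3
    then have "(Gfun (\<alpha> * \<rho>) + Gfun (\<alpha> * (1 - \<rho>))) / \<alpha>
        = \<rho> * (ln (pi1 (\<alpha> * \<rho>)) - ln \<alpha> - ln \<rho>)
          + (1 - \<rho>) * (ln (pi1 (\<alpha> * (1 - \<rho>))) - ln \<alpha> - ln (1 - \<rho>))"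
      by (simp add: add_divide_distrib Gfun_scaled)
    then show ?thesis
      using 3 by (simp add: Xi_def Sent_def algebra_simps)
  qed
qed

lemma Xi_symmetric: "\<alpha> > 0 \<Longrightarrow> \<rho> \<in> {0..1} \<Longrightarrow> Xi \<alpha> (1 - \<rho>) = Xi \<alpha> \<rho>"
  by (simp add: Xi_eq_Gfun algebra_simps)

lemma continuous_on_Xi:
  assumes "\<alpha> > 0"
  shows "continuous_on {0..1} (Xi \<alpha>)"
proof (rule continuous_on_eq)
  show "continuous_on {0..1}
      (\<lambda>\<rho>. ln \<alpha> + (Gfun (\<alpha> * \<rho>) + Gfun (\<alpha> * (1 - \<rho>))) / \<alpha> - \<alpha> * \<rho> * (1 - \<rho>))"
    using assms by (intro continuous_intros) auto
qed (simp add: Xi_eq_Gfun assms)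

definition Xi' :: "real \<Rightarrow> real \<Rightarrow> real" where
  "Xi' \<alpha> \<rho> = Gfun' (\<alpha> * \<rho>) - Gfun' (\<alpha> * (1 - \<rho>)) - \<alpha> * (1 - 2 * \<rho>)"

lemma has_real_derivative_Xi:
  assumes "\<alpha> > 0" "0 < \<rho>" "\<rho> < 1"
  shows "(Xi \<alpha> has_real_derivative Xi' \<alpha> \<rho>) (at \<rho>)"
proof -
  have "((\<lambda>r. ln \<alpha> + (Gfun (\<alpha> * r) + Gfun (\<alpha> * (1 - r))) / \<alpha> - \<alpha> * r * (1 - r))
      has_real_derivative Xi' \<alpha> \<rho>) (at \<rho>)"
    using assms
    by (auto intro!: derivative_eq_intros has_real_derivative_Gfun[THEN DERIV_chain2]
        simp: Xi'_def field_simps)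
  then show ?thesis
    by (rule has_field_derivative_transform_within_open[where S = "{0<..<1}"])
      (use assms in \<open>auto simp: Xi_eq_Gfun\<close>)
qed

lemma has_real_derivative_Xi':
  assumes "\<alpha> > 0" "0 < \<rho>" "\<rho> < 1"
  shows "(Xi' \<alpha> has_real_derivative \<alpha> * (Gfun'' (\<alpha> * \<rho>) + Gfun'' (\<alpha> * (1 - \<rho>)) + 2)) (at \<rho>)"
  unfolding Xi'_def using assms
  by (auto intro!: derivative_eq_intros has_real_derivative_Gfun'[THEN DERIV_chain2]
      simp: algebra_simps)

lemma strict_convex_on_Xi:
  assumes "\<alpha> > 0"
  shows "strict_convex_on {0..1} (Xi \<alpha>)"
proof (rule strict_convex_on_IccI[OF continuous_on_Xi[OF assms] has_real_derivative_Xi[OF assms]])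
  have "\<alpha> * (Gfun'' (\<alpha> * \<rho>) + Gfun'' (\<alpha> * (1 - \<rho>)) + 2) > 0" if "0 < \<rho>" "\<rho> < 1" for \<rho>
    using Gfun''_gt_minus_1[of "\<alpha> * \<rho>"] Gfun''_gt_minus_1[of "\<alpha> * (1 - \<rho>)"] assms that
    by simp
  then show "strict_mono_on {0<..<1} (Xi' \<alpha>)"
    using has_real_derivative_Xi'[OF assms] by (rule strict_mono_on_if_deriv_pos[rotated])
qed

theorem mainTheorem14:
  fixes \<alpha> :: real
  assumes "\<alpha> > 0"
  shows "continuous_on {0..1} (Xi \<alpha>)
       \<and> (\<forall>\<rho>\<in>{0..1}. Xi \<alpha> \<rho> = Xi \<alpha> (1 - \<rho>))
       \<and> strict_convex_on {0..1} (Xi \<alpha>)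
       \<and> (\<forall>\<rho>\<in>{0<..<1}. Xi \<alpha> \<rho> < Xi \<alpha> 0)
       \<and> (\<forall>\<eta>>0. deriv (deriv Gfun) \<eta> + 1 > 0)"
proof -
  have "Xi \<alpha> 0 = Xi \<alpha> 1"
    using Xi_symmetric[OF assms, of 1] by simp
  then have "\<forall>\<rho>\<in>{0<..<1}. Xi \<alpha> \<rho> < Xi \<alpha> 0"
    using strict_convex_on_Icc_below_endpoints[OF strict_convex_on_Xi[OF assms]] by blast
  moreover have "\<forall>\<eta>>0. deriv (deriv Gfun) \<eta> + 1 > 0"
    using deriv2_Gfun Gfun''_gt_minus_1 by force
  ultimately show ?thesis
    using continuous_on_Xi Xi_symmetric strict_convex_on_Xi assms by simp
qed

end
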